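(* $\displaystyle\lim_{\alpha\to+\infty}\tilde\theta_\alpha=\frac\pi4.$
   Context: For $\alpha>0$ and $\theta\in\mathbb{R}$ set $C_{\alpha,\theta}=\frac{\sin(2\theta)}{2\alpha}$ and $P_{\alpha,\theta}(x)=\alpha^2+\cos(2\theta)x^2-C_{\alpha,\theta}^2x^4$. Let $\theta^+_\alpha=\pi/2$ if $\alpha>1$, and $\theta^+_\alpha=\frac12\arccos(1-2\alpha^2)$ if $\alpha\le1$. Define $$L(\alpha,\theta)=\int_{-1}^1\frac{2\alpha C_{\alpha,\theta}^2x^2-\alpha\cos(2\theta)+C_{\alpha,\theta}^2x^2\sqrt{P_{\alpha,\theta}(x)}}{\sqrt{(1-x^2)P_{\alpha,\theta}(x)}\,\big(\alpha+\sqrt{P_{\alpha,\theta}(x)}\big)}\,dx.$$ For each $\alpha>0$, $\tilde\theta_\alpha$ denotes the unique $\theta\in(0,\theta^+_\alpha)\cap(0,\pi/4)$ with $L(\alpha,\theta)=0$. *)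

theory Defs
  imports "HOL-Analysis.Analysis"
begin

definition C_coef :: "real \<Rightarrow> real \<Rightarrow> real" where
  "C_coef \<alpha> \<theta> = sin (2 * \<theta>) / (2 * \<alpha>)"

definition P_poly :: "real \<Rightarrow> real \<Rightarrow> real \<Rightarrow> real" where
  "P_poly \<alpha> \<theta> x = \<alpha>\<^sup>2 + cos (2 * \<theta>) * x\<^sup>2 - (C_coef \<alpha> \<theta>)\<^sup>2 * x ^ 4"

definition theta_plus :: "real \<Rightarrow> real" where
  "theta_plus \<alpha> = (if \<alpha> > 1 then pi / 2 else arccos (1 - 2 * \<alpha>\<^sup>2) / 2)"

definition L_fun :: "real \<Rightarrow> real \<Rightarrow> real" where
  "L_fun \<alpha> \<theta> = integral {-1..1} (\<lambda>x.
     (2 * \<alpha> * (C_coef \<alpha> \<theta>)\<^sup>2 * x\<^sup>2 - \<alpha> * cos (2 * \<theta>)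
        + (C_coef \<alpha> \<theta>)\<^sup>2 * x\<^sup>2 * sqrt (P_poly \<alpha> \<theta> x))
     / (sqrt ((1 - x\<^sup>2) * P_poly \<alpha> \<theta> x) * (\<alpha> + sqrt (P_poly \<alpha> \<theta> x))))"

definition theta_tilde :: "real \<Rightarrow> real" where
  "theta_tilde \<alpha> = (THE \<theta>. \<theta> \<in> {0<..<theta_plus \<alpha>} \<inter> {0<..<pi/4} \<and> L_fun \<alpha> \<theta> = 0)"

end

theory Submission
  imports Defs "HOL-Real_Asymp.Real_Asymp"
begin

text \<open>
  Substituting \<open>x = sin t\<close> and writing \<open>c = cos (2\<theta>)\<close>, so that \<open>C\<^sup>2 = (1 - c\<^sup>2) / (4\<alpha>\<^sup>2)\<close>,
  turns \<open>L(\<alpha>,\<theta>)\<close> into the integral \<open>L_cos \<alpha> c\<close> of a continuous integrand over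
  \<open>[-\<pi>/2, \<pi>/2]\<close>. For \<open>\<alpha> \<ge> 3\<close> the integrand is strictly decreasing in \<open>c\<close>, nonnegative
  for \<open>c = 0\<close> and negative once \<open>c \<alpha>\<^sup>2 > 6\<close>. Hence \<open>L_cos \<alpha>\<close> has exactly one root
  \<open>c\<^sub>\<alpha> \<in> (0, 6/\<alpha>\<^sup>2]\<close>, and \<open>\<theta>\<^sub>\<alpha> = arccos c\<^sub>\<alpha> / 2 \<rightarrow> arccos 0 / 2 = \<pi>/4\<close>.
\<close>

definition C_sq :: "real \<Rightarrow> real \<Rightarrow> real" where
  "C_sq a c = (1 - c\<^sup>2) / (4 * a\<^sup>2)"

definition P_quad :: "real \<Rightarrow> real \<Rightarrow> real \<Rightarrow> real" where
  "P_quad a c y = a\<^sup>2 + c * y - C_sq a c * y\<^sup>2"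

text \<open>The integrand of \<open>L\<close> without the factor \<open>1 / sqrt (1 - x\<^sup>2)\<close>, which is absorbed
  by the substitution \<open>x = sin t\<close>.\<close>
definition L_integrand :: "real \<Rightarrow> real \<Rightarrow> real \<Rightarrow> real" where
  "L_integrand a c x =
     (2 * a * C_sq a c * x\<^sup>2 - a * c + C_sq a c * x\<^sup>2 * sqrt (P_quad a c (x\<^sup>2)))
     / (sqrt (P_quad a c (x\<^sup>2)) * (a + sqrt (P_quad a c (x\<^sup>2))))"

definition L_cos :: "real \<Rightarrow> real \<Rightarrow> real" where
  "L_cos a c = integral {-(pi/2)..pi/2} (\<lambda>t. L_integrand a c (sin t))"

lemma C_sq_bounds:
  assumes "0 \<le> c" "c \<le> 1"
  shows "0 \<le> C_sq a c \<and> C_sq a c \<le> 1 / (4 * a\<^sup>2)"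
  unfolding C_sq_def using assms by (auto simp: divide_right_mono power_le_one)

lemma C_sq_antimono:
  assumes "0 \<le> c1" "c1 \<le> c2"
  shows "C_sq a c2 \<le> C_sq a c1"
  unfolding C_sq_def using assms by (intro divide_right_mono diff_mono power_mono) auto

lemma P_quad_bounds:
  assumes "a \<ge> 3" "0 \<le> c" "c \<le> 1" "0 \<le> y" "y \<le> 1"
  shows "a\<^sup>2 / 4 \<le> P_quad a c y \<and> P_quad a c y \<le> (a + 1)\<^sup>2"
proof -
  have C: "0 \<le> C_sq a c" "C_sq a c \<le> 1 / (4 * a\<^sup>2)" using C_sq_bounds assms by auto
  have "1 \<le> a\<^sup>2" using assms by (simp add: one_le_power)
  then have "1 / (4 * a\<^sup>2) \<le> 1" by (simp add: divide_le_eq)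
  have y2: "y\<^sup>2 \<le> 1" "0 \<le> y\<^sup>2" using assms by (auto simp: power_le_one)
  have "C_sq a c * y\<^sup>2 \<le> 1" using C y2 \<open>1 / (4 * a\<^sup>2) \<le> 1\<close> by (meson mult_le_one order_trans)
  moreover have "0 \<le> C_sq a c * y\<^sup>2" using C y2 by simp
  moreover have "c * y \<le> 1" "0 \<le> c * y" using assms by (auto simp: mult_le_one)
  moreover have "9 \<le> a * a" using assms mult_mono[of 3 a 3 a] by simp
  moreover have "(a + 1)\<^sup>2 = a * a + 2 * a + 1" "a\<^sup>2 = a * a"
    by (simp_all add: power2_eq_square algebra_simps)
  ultimately show ?thesis unfolding P_quad_def using assms by (simp only:) linarith
qed

lemma sqrt_P_quad_bounds:
  assumes "a \<ge> 3" "0 \<le> c" "c \<le> 1" "0 \<le> y" "y \<le> 1"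
  shows "a / 2 \<le> sqrt (P_quad a c y) \<and> sqrt (P_quad a c y) \<le> a + 1"
proof -
  from P_quad_bounds[OF assms] have P: "a\<^sup>2 / 4 \<le> P_quad a c y" "P_quad a c y \<le> (a + 1)\<^sup>2" by auto
  have "a / 2 \<le> sqrt (P_quad a c y)" by (rule real_le_rsqrt) (use P in \<open>simp add: power_divide\<close>)
  moreover have "sqrt (P_quad a c y) \<le> a + 1" by (rule real_le_lsqrt) (use assms P in auto)
  ultimately show ?thesis by simp
qed

lemma P_quad_increment:
  assumes "a \<ge> 3" "0 \<le> c1" "c1 \<le> c2" "c2 \<le> 1" "0 \<le> y" "y \<le> 1"
  shows "P_quad a c1 y \<le> P_quad a c2 y \<and> P_quad a c2 y - P_quad a c1 y \<le> 3 * (c2 - c1)"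
proof -
  have sq: "c1\<^sup>2 \<le> c2\<^sup>2" using assms by (intro power_mono) auto
  have "C_sq a c1 - C_sq a c2 = (c2\<^sup>2 - c1\<^sup>2) / (4 * a\<^sup>2)"
    unfolding C_sq_def by (simp add: diff_divide_distrib)
  also have "\<dots> \<le> c2\<^sup>2 - c1\<^sup>2"
  proof -
    have "3\<^sup>2 \<le> a\<^sup>2" using assms by (intro power_mono) auto
    then have "(c2\<^sup>2 - c1\<^sup>2) * 1 \<le> (c2\<^sup>2 - c1\<^sup>2) * (4 * a\<^sup>2)" using sq by (intro mult_left_mono) auto
    then show ?thesis using assms by (simp add: divide_le_eq)
  qed
  also have "\<dots> = (c2 - c1) * (c2 + c1)" by (simp add: power2_eq_square algebra_simps)
  also have "\<dots> \<le> (c2 - c1) * 2" using assms by (intro mult_left_mono) auto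
  finally have C_diff: "C_sq a c1 - C_sq a c2 \<le> 2 * (c2 - c1)" by simp
  have C_anti: "C_sq a c2 \<le> C_sq a c1" using C_sq_antimono assms by simp
  have "P_quad a c2 y - P_quad a c1 y = (c2 - c1) * y + (C_sq a c1 - C_sq a c2) * y\<^sup>2"
    unfolding P_quad_def by (simp add: algebra_simps)
  moreover have "(c2 - c1) * y + (C_sq a c1 - C_sq a c2) * y\<^sup>2 \<le> (c2 - c1) * 1 + (2 * (c2 - c1)) * 1"
    using assms C_diff C_anti by (intro add_mono mult_mono) (auto simp: power_le_one)
  moreover have "0 \<le> (c2 - c1) * y + (C_sq a c1 - C_sq a c2) * y\<^sup>2"
    using assms C_anti by simp
  ultimately show ?thesis by simp
qed

lemma L_integrand_split:
  assumes "a \<ge> 3" "0 \<le> c" "c \<le> 1" "x\<^sup>2 \<le> 1"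
  defines "u \<equiv> sqrt (P_quad a c (x\<^sup>2))"
  shows "L_integrand a c x = C_sq a c * x\<^sup>2 * (1 / u + a / (u * (a + u))) - a * c / (u * (a + u))"
proof -
  have "a / 2 \<le> u" using sqrt_P_quad_bounds[of a c "x\<^sup>2"] assms unfolding u_def by auto
  then have "u > 0" "a + u > 0" using assms by linarith+
  then have "1 / u + a / (u * (a + u)) = (2 * a + u) / (u * (a + u))"
    by (simp add: divide_simps)
  then show ?thesis
    unfolding L_integrand_def u_def[symmetric] by (simp add: diff_divide_distrib algebra_simps)
qed

text \<open>With \<open>u\<^sub>i = sqrt P(c\<^sub>i)\<close>, this says \<open>c\<^sub>1 / (u\<^sub>1 (a + u\<^sub>1)) < c\<^sub>2 / (u\<^sub>2 (a + u\<^sub>2))\<close>: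
  the growth of \<open>u\<close> in \<open>c\<close> is too slow to compensate the growth of \<open>c\<close>.\<close>
lemma cos_term_less:
  fixes a c1 c2 u1 u2 :: real
  assumes "a \<ge> 3" "0 \<le> c1" "c1 < c2" "c2 \<le> 1" "a / 2 \<le> u1" "u1 \<le> u2"
    "(u2 - u1) * (u1 + u2) \<le> 3 * (c2 - c1)"
  shows "c1 * (u2 * (a + u2)) < c2 * (u1 * (a + u1))"
proof -
  define X where "X = (u2 - u1) * (a + u1 + u2)"
  define Y where "Y = u1 * (a + u1)"
  define D where "D = c2 - c1"
  have "X \<le> (u2 - u1) * (2 * (u1 + u2))"
    unfolding X_def using assms by (intro mult_left_mono) auto
  also have "\<dots> = 2 * ((u2 - u1) * (u1 + u2))" by (simp add: algebra_simps)
  finally have "X \<le> 6 * D" using assms unfolding D_def by linarith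
  moreover have "c1 * X \<le> X"
    using assms mult_right_mono[of c1 1 X] unfolding X_def by auto
  moreover have "(3/2) * (9/2) \<le> Y" unfolding Y_def using assms by (intro mult_mono) auto
  then have "D * (27/4) \<le> D * Y" using assms unfolding D_def by (intro mult_left_mono) auto
  moreover have "0 < D" using assms unfolding D_def by simp
  ultimately have "0 < D * Y - c1 * X" by linarith
  moreover have "c2 * (u1 * (a + u1)) - c1 * (u2 * (a + u2)) = D * Y - c1 * X"
    unfolding X_def Y_def D_def by (simp add: algebra_simps)
  ultimately show ?thesis by simp
qed

lemma L_integrand_strict_antimono:
  assumes "a \<ge> 3" "0 \<le> c1" "c1 < c2" "c2 \<le> 1" "x\<^sup>2 \<le> 1"
  shows "L_integrand a c2 x < L_integrand a c1 x"
proof -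
  define y where "y = x\<^sup>2"
  have y: "0 \<le> y" "y \<le> 1" using assms by (auto simp: y_def)
  define u1 where "u1 = sqrt (P_quad a c1 y)"
  define u2 where "u2 = sqrt (P_quad a c2 y)"
  have u1: "a / 2 \<le> u1" using sqrt_P_quad_bounds[of a c1 y] assms y by (auto simp: u1_def)
  have u2: "a / 2 \<le> u2" using sqrt_P_quad_bounds[of a c2 y] assms y by (auto simp: u2_def)
  have P: "P_quad a c1 y \<le> P_quad a c2 y" "P_quad a c2 y - P_quad a c1 y \<le> 3 * (c2 - c1)"
    using P_quad_increment[of a c1 c2 y] assms y by auto
  have P_nonneg: "0 \<le> P_quad a c1 y" "0 \<le> P_quad a c2 y"
    using P_quad_bounds[of a c1 y] P_quad_bounds[of a c2 y] y assms
    by (smt (verit) zero_le_divide_iff zero_le_power2)+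
  have u12: "u1 \<le> u2" unfolding u1_def u2_def using P by simp
  have "(u2 - u1) * (u1 + u2) = P_quad a c2 y - P_quad a c1 y"
    using P_nonneg by (simp add: u1_def u2_def power2_eq_square[symmetric] algebra_simps)
  then have "c1 * (u2 * (a + u2)) < c2 * (u1 * (a + u1))"
    using cos_term_less[of a c1 c2 u1 u2] assms u1 u12 P by simp
  moreover have "0 < u1 * (a + u1)" "0 < u2 * (a + u2)" using u1 u2 assms by auto
  ultimately have cos_term: "a * c1 / (u1 * (a + u1)) < a * c2 / (u2 * (a + u2))"
    using assms by (simp add: divide_simps)
  have "1 / u2 + a / (u2 * (a + u2)) \<le> 1 / u1 + a / (u1 * (a + u1))"
    using u1 u2 u12 assms by (intro add_mono divide_left_mono mult_mono) auto
  moreover have "0 \<le> 1 / u2 + a / (u2 * (a + u2))" using u2 assms by auto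
  moreover have "0 \<le> C_sq a c2" "C_sq a c2 \<le> C_sq a c1"
    using C_sq_bounds[of c2 a] C_sq_antimono[of c1 c2 a] assms by auto
  ultimately have "C_sq a c2 * y * (1 / u2 + a / (u2 * (a + u2)))
      \<le> C_sq a c1 * y * (1 / u1 + a / (u1 * (a + u1)))"
    using y by (intro mult_mono) auto
  then show ?thesis
    using L_integrand_split[of a c1 x] L_integrand_split[of a c2 x] assms cos_term
    unfolding u1_def u2_def y_def by simp
qed

lemma L_integrand_le:
  assumes "a \<ge> 3" "0 \<le> c" "c \<le> 1" "x\<^sup>2 \<le> 1"
  shows "L_integrand a c x \<le> 1 / a^3 - c / (6 * a)"
proof -
  define u where "u = sqrt (P_quad a c (x\<^sup>2))"
  have u: "a / 2 \<le> u" "u \<le> a + 1" using sqrt_P_quad_bounds[of a c "x\<^sup>2"] assms by (auto simp: u_def)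
  have C: "0 \<le> C_sq a c" "C_sq a c \<le> 1 / (4 * a\<^sup>2)" using C_sq_bounds assms by auto
  have "1 / u \<le> 1 / (a / 2)" using u assms by (intro divide_left_mono) auto
  moreover have "a / (u * (a + u)) \<le> a / ((a / 2) * (a + a / 2))"
    using u assms by (intro divide_left_mono mult_mono) auto
  moreover have "a / ((a / 2) * (a + a / 2)) \<le> 2 / a" using assms by (simp add: field_simps)
  ultimately have "1 / u + a / (u * (a + u)) \<le> 4 / a" by simp
  moreover have "0 \<le> 1 / u + a / (u * (a + u))" using u assms by auto
  ultimately have "C_sq a c * x\<^sup>2 * (1 / u + a / (u * (a + u))) \<le> (1 / (4 * a\<^sup>2)) * 1 * (4 / a)"
    using C assms by (intro mult_mono) auto
  also have "\<dots> = 1 / a^3" by (simp add: power2_eq_square power3_eq_cube)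
  finally have sin_term: "C_sq a c * x\<^sup>2 * (1 / u + a / (u * (a + u))) \<le> 1 / a^3" .
  have "u * (a + u) \<le> (a + 1) * (a + (a + 1))" using u assms by (intro mult_mono add_mono) auto
  also have "\<dots> \<le> 6 * a\<^sup>2"
  proof -
    have "a * 3 \<le> a * a" using assms by (intro mult_left_mono) auto
    moreover have "(a + 1) * (a + (a + 1)) = 2 * (a * a) + 3 * a + 1" "6 * a\<^sup>2 = 6 * (a * a)"
      by (simp_all add: power2_eq_square algebra_simps)
    ultimately show ?thesis using assms by linarith
  qed
  finally have "a * c / (6 * a\<^sup>2) \<le> a * c / (u * (a + u))"
    using u assms by (intro divide_left_mono) auto
  then have cos_term: "c / (6 * a) \<le> a * c / (u * (a + u))"
    using assms by (simp add: power2_eq_square)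
  show ?thesis using L_integrand_split[OF assms] sin_term cos_term unfolding u_def by simp
qed

lemma L_integrand_continuous:
  assumes "a \<ge> 3"
  shows "continuous_on ({0..1} \<times> {-(pi/2)..pi/2}) (\<lambda>(c, t). L_integrand a c (sin t))"
proof -
  have sqrt_P_pos: "0 < sqrt (P_quad a c ((sin t)\<^sup>2))" if "0 \<le> c" "c \<le> 1" for c t
  proof -
    have "a / 2 \<le> sqrt (P_quad a c ((sin t)\<^sup>2))"
      using sqrt_P_quad_bounds[of a c "(sin t)\<^sup>2"] that assms by (simp add: abs_square_le_1)
    then show ?thesis using assms by linarith
  qed
  then have "P_quad a c ((sin t)\<^sup>2) \<noteq> 0" "a + sqrt (P_quad a c ((sin t)\<^sup>2)) \<noteq> 0"
    if "0 \<le> c" "c \<le> 1" for c t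
    using that assms by (metis real_sqrt_zero less_irrefl, smt (verit))
  with sqrt_P_pos assms show ?thesis
    unfolding L_integrand_def P_quad_def C_sq_def case_prod_beta
    by (intro continuous_intros) (auto simp: less_eq_prod_def)
qed

lemma L_integrand_continuous_sin:
  assumes "a \<ge> 3" "0 \<le> c" "c \<le> 1"
  shows "continuous_on {-(pi/2)..pi/2} (\<lambda>t. L_integrand a c (sin t))"
proof -
  have "continuous_on {-(pi/2)..pi/2} ((\<lambda>(c, t). L_integrand a c (sin t)) \<circ> (\<lambda>t. (c, t)))"
    by (rule continuous_on_compose[OF _ continuous_on_subset[OF L_integrand_continuous[OF assms(1)]]])
       (use assms in \<open>auto intro!: continuous_intros\<close>)
  then show ?thesis by (simp add: o_def)
qed

lemma L_cos_continuous: "a \<ge> 3 \<Longrightarrow> continuous_on {0..1} (L_cos a)"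
  unfolding L_cos_def
  using integral_continuous_on_param[of "{0..1}" "-(pi/2)" "pi/2" "\<lambda>c t. L_integrand a c (sin t)"]
    L_integrand_continuous[of a] by (simp add: cbox_interval)

lemma integral_pos_continuous:
  fixes f :: "real \<Rightarrow> real"
  assumes "continuous_on {l..r} f" "l < r" "\<And>x. x \<in> {l..r} \<Longrightarrow> 0 \<le> f x" "p \<in> {l..r}" "f p > 0"
  shows "integral {l..r} f > 0"
proof -
  have "0 \<le> integral {l..r} f"
    using assms by (intro integral_nonneg integrable_continuous_interval) auto
  moreover have "integral {l..r} f \<noteq> 0"
    using integral_cbox_eq_0_iff[of l r f] assms by (auto simp: cbox_interval)
  ultimately show ?thesis by simp
qed

lemma L_cos_strict_antimono:
  assumes "a \<ge> 3" "0 \<le> c1" "c1 < c2" "c2 \<le> 1"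
  shows "L_cos a c2 < L_cos a c1"
proof -
  have cont: "continuous_on {-(pi/2)..pi/2} (\<lambda>t. L_integrand a c (sin t))" if "c \<in> {c1, c2}" for c
    using that assms by (intro L_integrand_continuous_sin) auto
  have "0 < integral {-(pi/2)..pi/2} (\<lambda>t. L_integrand a c1 (sin t) - L_integrand a c2 (sin t))"
    using assms cont L_integrand_strict_antimono[of a c1 c2]
    by (intro integral_pos_continuous[where p = 0] continuous_on_diff)
       (auto simp: abs_square_le_1 less_imp_le)
  then show ?thesis
    unfolding L_cos_def using cont by (simp add: integral_diff integrable_continuous_interval)
qed

lemma L_cos_at_0_pos:
  assumes "a \<ge> 3"
  shows "L_cos a 0 > 0"
  unfolding L_cos_def
proof (rule integral_pos_continuous[where p = "pi/2"])
  have C: "0 < C_sq a 0" using assms by (simp add: C_sq_def)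
  have B: "0 < 1 / u + a / (u * (a + u))" if "a / 2 \<le> u" for u
    using assms that by (intro add_pos_pos divide_pos_pos mult_pos_pos) auto
  have "0 \<le> L_integrand a 0 x \<and> (x \<noteq> 0 \<longrightarrow> 0 < L_integrand a 0 x)" if "x\<^sup>2 \<le> 1" for x
    using L_integrand_split[of a 0 x] B[of "sqrt (P_quad a 0 (x\<^sup>2))"] C
      sqrt_P_quad_bounds[of a 0 "x\<^sup>2"] assms that
    by (auto intro!: mult_pos_pos)
  then show "0 \<le> L_integrand a 0 (sin t)" "0 < L_integrand a 0 (sin (pi/2))" for t
    by (simp_all add: abs_square_le_1)
qed (use L_integrand_continuous_sin assms in auto)

lemma L_cos_neg:
  assumes "a \<ge> 3" "0 < c" "c \<le> 1" "6 < c * a\<^sup>2"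
  shows "L_cos a c < 0"
proof -
  have "L_cos a c \<le> integral {-(pi/2)..pi/2} (\<lambda>t. 1 / a^3 - c / (6 * a))"
    unfolding L_cos_def using assms
    by (intro integral_le integrable_continuous_interval L_integrand_continuous_sin L_integrand_le)
       (auto simp: abs_square_le_1)
  also have "\<dots> = pi * (1 / a^3 - c / (6 * a))" by simp
  also have "\<dots> < 0"
    using assms by (simp add: mult_pos_neg field_simps power2_eq_square power3_eq_cube)
  finally show ?thesis .
qed

lemma L_fun_eq_L_cos:
  assumes "a \<ge> 3" "0 \<le> cos (2 * \<theta>)"
  shows "L_fun a \<theta> = L_cos a (cos (2 * \<theta>))"
proof -
  define c where "c = cos (2 * \<theta>)"
  have c: "0 \<le> c" "c \<le> 1" using assms by (simp_all add: c_def)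
  have C: "(C_coef a \<theta>)\<^sup>2 = C_sq a c"
    unfolding C_coef_def C_sq_def c_def by (simp add: power_divide sin_squared_eq power_mult_distrib)
  have P: "P_poly a \<theta> x = P_quad a c (x\<^sup>2)" for x
    unfolding P_poly_def P_quad_def C c_def[symmetric] by (simp add: power2_eq_square power4_eq_xxxx)
  have "L_fun a \<theta> = integral {-1..1} (\<lambda>x. (1 / sqrt (1 - x\<^sup>2)) *\<^sub>R L_integrand a c (sin (arcsin x)))"
    unfolding L_fun_def
    by (intro integral_cong) (simp add: L_integrand_def C P c_def[symmetric] real_sqrt_mult mult.assoc)
  also have "\<dots> = integral {arcsin (-1)..arcsin 1} (\<lambda>t. L_integrand a c (sin t))"
  proof (rule integral_unique)
    show "((\<lambda>x. (1 / sqrt (1 - x\<^sup>2)) *\<^sub>R L_integrand a c (sin (arcsin x))) has_integral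
        integral {arcsin (-1)..arcsin 1} (\<lambda>t. L_integrand a c (sin t))) {-1..1}"
    proof (rule has_integral_substitution_strong[of "{-1, 1}" "-1" 1 arcsin "-(pi/2)" "pi/2"])
      show "(arcsin has_real_derivative 1 / sqrt (1 - x\<^sup>2)) (at x within {-1..1})"
        if "x \<in> {-1..1} - {-1, 1}" for x
        using DERIV_arcsin[of x] that by (auto simp: divide_inverse has_field_derivative_at_within)
    qed (use arcsin_bounded c assms L_integrand_continuous_sin continuous_on_arcsin' in auto)
  qed
  finally show ?thesis by (simp add: L_cos_def c_def)
qed

lemma L_cos_root:
  assumes "a \<ge> 3"
  obtains c where "0 < c" "c < 1" "c \<le> 6 / a\<^sup>2" "L_cos a c = 0"
proof -
  have "6 < 1 * a\<^sup>2" using assms power_mono[of 3 a 2] by simp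
  then have "L_cos a 1 < 0" using L_cos_neg[of a 1] assms by simp
  moreover have "L_cos a 0 > 0" using L_cos_at_0_pos assms by simp
  ultimately obtain c where c: "0 \<le> c" "c \<le> 1" "L_cos a c = 0"
    using IVT2'[of "L_cos a" 1 0 0] L_cos_continuous[OF assms] by auto
  moreover have "c \<le> 6 / a\<^sup>2"
    using L_cos_neg[of a c] c assms by (force simp: field_simps)
  moreover have "c \<noteq> 0" "c \<noteq> 1" using c \<open>L_cos a 1 < 0\<close> \<open>L_cos a 0 > 0\<close> by auto
  ultimately show thesis by (intro that) auto
qed

lemma theta_tilde_eq_arccos:
  assumes "a \<ge> 3" "0 < c" "c < 1" "L_cos a c = 0"
  shows "theta_tilde a = arccos c / 2"
  unfolding theta_tilde_def
proof (rule the_equality)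
  have "0 < arccos c" "arccos c < pi/2"
    using arccos_lt_bounded[of c] arccos_less_arccos[of 0 c] assms by auto
  moreover have "theta_plus a = pi/2" using assms by (simp add: theta_plus_def)
  ultimately show "arccos c / 2 \<in> {0<..<theta_plus a} \<inter> {0<..<pi/4} \<and> L_fun a (arccos c / 2) = 0"
    using L_fun_eq_L_cos[of a "arccos c / 2"] assms by auto
next
  fix t assume t: "t \<in> {0<..<theta_plus a} \<inter> {0<..<pi/4} \<and> L_fun a t = 0"
  then have "0 < cos (2 * t)" "cos (2 * t) < 1"
    using cos_gt_zero[of "2 * t"] cos_monotone_0_pi[of 0 "2 * t"] by auto
  moreover have "L_cos a (cos (2 * t)) = 0" using L_fun_eq_L_cos[of a t] t assms calculation by simp
  ultimately have "cos (2 * t) = c"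
    using L_cos_strict_antimono[of a "cos (2 * t)" c] L_cos_strict_antimono[of a c "cos (2 * t)"] assms
    by (cases "cos (2 * t)" c rule: linorder_cases) auto
  then show "t = arccos c / 2" using arccos_cos[of "2 * t"] t by auto
qed

theorem lemma4p6:
  shows "(theta_tilde \<longlongrightarrow> pi / 4) at_top"
proof -
  define c where "c a = cos (2 * theta_tilde a)" for a
  have root: "0 < c a \<and> c a \<le> 6 / a\<^sup>2 \<and> theta_tilde a = arccos (c a) / 2" if a: "a \<ge> 3" for a
  proof -
    obtain r where "0 < r" "r < 1" "r \<le> 6 / a\<^sup>2" "L_cos a r = 0" using L_cos_root[OF a] .
    moreover have theta: "theta_tilde a = arccos r / 2" using theta_tilde_eq_arccos a calculation by simp
    moreover have "c a = r" using calculation by (simp add: c_def theta)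
    ultimately show ?thesis by simp
  qed
  have ev: "eventually (\<lambda>a. 0 < c a \<and> c a \<le> 6 / a\<^sup>2 \<and> theta_tilde a = arccos (c a) / 2) at_top"
    by (rule eventually_mono[OF eventually_ge_at_top[of 3] root])
  have "(c \<longlongrightarrow> 0) at_top"
    by (rule real_tendsto_sandwich[of "\<lambda>_. 0" _ _ "\<lambda>a. 6 / a\<^sup>2"])
       (use ev in \<open>auto elim: eventually_mono\<close>, real_asymp)
  then have "((\<lambda>a. arccos (c a) / 2) \<longlongrightarrow> pi / 4) at_top"
    using tendsto_divide[OF isCont_tendsto_compose[OF isCont_arccos] tendsto_const, of 0 c at_top 2]
    by simp
  then show ?thesis
    by (rule Lim_transform_eventually) (use ev in \<open>auto elim: eventually_mono\<close>)
qed

end
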